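(* Let $C>1$ and let $P$ be a probability measure on $[0,\infty)$. Consider the equation $G_{P,C}(\mu)=0$, $\mu\ge0$. (1) If $\mathbb{P}_{t\sim P}[t=0]<1-\frac1C$, the equation has exactly two solutions, namely $0$ and $\mu_{P,C}>0$. (2) If $\mathbb{P}_{t\sim P}[t=0]=1-\frac1C$, then $G_{P,C}(\mu)=0$ for all $0\le\mu\le\frac1Cm_P$, and $\mu_{P,C}=\frac1Cm_P$. (3) If $\mathbb{P}_{t\sim P}[t=0]>1-\frac1C$, the only solution is $0$, so $\mu_{P,C}=0$.
   Context: For $\mu\ge0$ define $G_{P,C}(\mu):=\mathbb{E}_{t\sim P}[\min\{t,C\mu\}]-\mu$. The $C$-clipped mean $\mu_{P,C}$ is the largest $\mu\ge0$ with $G_{P,C}(\mu)=0$. The $\frac1C$-median is $m_P:=\sup\{M\ge0:\mathbb{P}_{t\sim P}[t\ge M]\ge\frac1C\}$. *)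

theory Defs
  imports "HOL-Probability.Probability"
begin

text \<open>P is a probability measure on the reals (Borel sets) concentrated on [0,\<infinity>).\<close>

definition G_clip :: "real measure \<Rightarrow> real \<Rightarrow> real \<Rightarrow> real" where
  "G_clip P C \<mu> = (\<integral>t. min t (C * \<mu>) \<partial>P) - \<mu>"

definition clipped_mean :: "real measure \<Rightarrow> real \<Rightarrow> real" where
  "clipped_mean P C = (GREATEST \<mu>. \<mu> \<ge> 0 \<and> G_clip P C \<mu> = 0)"

definition inv_C_median :: "real measure \<Rightarrow> real \<Rightarrow> real" where
  "inv_C_median P C = Sup {M. M \<ge> 0 \<and> measure P {M..} \<ge> 1 / C}"

end

theory Submission
  imports Defs
begin

text \<open>Write \<open>p = P(t > 0) = 1 - P(t = 0)\<close>, so that the three cases are \<open>C p > 1\<close>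
(supercritical), \<open>C p = 1\<close> (critical) and \<open>C p < 1\<close> (subcritical). The map \<open>G\<close> is concave
with \<open>G 0 = 0\<close>, and \<open>G \<mu> = (C p - 1) \<mu> - E[(C \<mu> - t) 1{0 < t < C \<mu>}]\<close>. In the subcritical
case this makes \<open>G\<close> negative on \<open>(0, \<infinity>)\<close>. In the critical case \<open>G \<mu> = 0\<close> exactly when
\<open>P(0 < t < C \<mu>) = 0\<close>, i.e. when \<open>C \<mu>\<close> is at most the \<open>1/C\<close>-median. In the supercritical case
\<open>G \<mu> / \<mu> = E[min (t / \<mu>) C] - 1\<close> tends to \<open>C p - 1 > 0\<close> as \<open>\<mu> \<rightarrow> 0\<close> and to \<open>-1\<close> as
\<open>\<mu> \<rightarrow> \<infinity>\<close>, so \<open>G\<close> has a positive zero, and concavity leaves room for only one.\<close>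

lemma concave_on_pos_interior:
  fixes g :: "real \<Rightarrow> real"
  assumes "concave_on {x..y} g" "0 \<le> g x" "0 \<le> g y" "0 < g x \<or> 0 < g y" "x < a" "a < y"
  shows "0 < g a"
proof -
  have "(g y - g x) / (y - x) * (a - x) + g x \<le> g a"
    using concave_onD_Icc'[OF assms(1), of a] assms(5,6) by simp
  moreover have "(g y - g x) / (y - x) * (a - x) + g x = (g x * (y - a) + g y * (a - x)) / (y - x)"
    using assms(5,6) by (simp add: field_simps)
  moreover have "0 < g x * (y - a) + g y * (a - x)"
  proof -
    have "0 \<le> g x * (y - a)" "0 \<le> g y * (a - x)"
      using assms(2,3,5,6) by simp_all
    moreover have "0 < g x * (y - a) \<or> 0 < g y * (a - x)"
      using assms(4-6) by auto
    ultimately show ?thesis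
      by linarith
  qed
  moreover have "0 < y - x"
    using assms(5,6) by simp
  ultimately show ?thesis
    by (metis divide_pos_pos order_less_le_trans)
qed

lemma clipped_mean_eqI:
  assumes "0 \<le> r" "G_clip P C r = 0" "\<And>\<mu>. 0 \<le> \<mu> \<Longrightarrow> G_clip P C \<mu> = 0 \<Longrightarrow> \<mu> \<le> r"
  shows "clipped_mean P C = r"
  unfolding clipped_mean_def using assms by (intro Greatest_equality) auto

locale nonneg_real_distribution = prob_space P for P :: "real measure" +
  assumes sets_P: "sets P = sets borel"
    and AE_nonneg: "AE t in P. 0 \<le> t"
begin

lemma space_P: "space P = UNIV"
  using sets_eq_imp_space_eq[OF sets_P] by simp

lemma measurable_ident_P [measurable]: "(\<lambda>t. t) \<in> borel_measurable P"
  using measurable_ident_sets[OF sets_P] .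

lemma sets_P_borel [measurable]: "A \<in> sets borel \<Longrightarrow> A \<in> sets P"
  by (simp add: sets_P)

lemma integrable_min_const: "integrable P (\<lambda>t. min t c)"
proof (rule integrable_const_bound[where B="\<bar>c\<bar>"])
  show "AE t in P. norm (min t c) \<le> \<bar>c\<bar>"
    using AE_nonneg by eventually_elim auto
qed measurable

lemma measure_singleton_0: "measure P {0} = 1 - measure P {0<..}"
proof -
  have "{..<0} \<in> null_sets P"
    using AE_nonneg by (subst AE_iff_null_sets) (auto simp: not_less)
  then have "measure P ({0} \<union> {0<..} \<union> {..<0}) = measure P ({0} \<union> {0<..})"
    by (intro measure_Un_null_set) auto
  moreover have "{0} \<union> {0<..} \<union> {..<0} = space P"
    by (auto simp: space_P)
  ultimately have "measure P ({0} \<union> {0<..}) = 1"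
    by (simp add: prob_space)
  moreover have "measure P ({0} \<union> {0<..}) = measure P {0} + measure P {0<..}"
    by (intro finite_measure_Union) auto
  ultimately show ?thesis by simp
qed

lemma G_clip_0: "G_clip P C 0 = 0"
proof -
  have "(\<integral>t. min t (C * 0) \<partial>P) = (\<integral>t. 0 \<partial>P)"
    using AE_nonneg by (intro integral_cong_AE) (auto elim: eventually_mono)
  then show ?thesis by (simp add: G_clip_def)
qed

lemma concave_G_clip: "concave_on UNIV (G_clip P C)"
proof (rule concave_on_linorderI)
  fix l x y :: real assume l: "0 < l" "l < 1"
  have pointwise: "(1 - l) * min t (C * x) + l * min t (C * y) \<le> min t (C * ((1 - l) * x + l * y))" for t
  proof -
    have "(1 - l) * min t (C * x) + l * min t (C * y) \<le> (1 - l) * t + l * t"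
      "(1 - l) * min t (C * x) + l * min t (C * y) \<le> (1 - l) * (C * x) + l * (C * y)"
      using l by (intro add_mono mult_left_mono; simp)+
    then show ?thesis by (simp add: algebra_simps)
  qed
  have "(1 - l) * (\<integral>t. min t (C * x) \<partial>P) + l * (\<integral>t. min t (C * y) \<partial>P)
      \<le> (\<integral>t. min t (C * ((1 - l) * x + l * y)) \<partial>P)"
  proof -
    have "(1 - l) * (\<integral>t. min t (C * x) \<partial>P) + l * (\<integral>t. min t (C * y) \<partial>P)
        = (\<integral>t. (1 - l) * min t (C * x) + l * min t (C * y) \<partial>P)"
      by (simp add: integrable_min_const)
    also have "\<dots> \<le> (\<integral>t. min t (C * ((1 - l) * x + l * y)) \<partial>P)"
      by (intro integral_mono[OF _ _ pointwise]) (auto intro!: integrable_min_const)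
    finally show ?thesis .
  qed
  then show "(1 - l) * G_clip P C x + l * G_clip P C y \<le> G_clip P C ((1 - l) *\<^sub>R x + l *\<^sub>R y)"
    by (simp add: G_clip_def algebra_simps)
qed simp

lemma continuous_G_clip: "continuous_on UNIV (G_clip P C)"
proof -
  have "continuous_on UNIV (\<lambda>\<mu>. - G_clip P C \<mu>)"
    using concave_G_clip by (intro convex_on_continuous) (auto simp: concave_on_def)
  then show ?thesis
    using continuous_on_minus by fastforce
qed

lemma G_clip_eq_gap_integral:
  assumes "0 \<le> C * \<mu>"
  shows "G_clip P C \<mu> = (C * measure P {0<..} - 1) * \<mu>
           - (\<integral>t. (C * \<mu> - t) * indicator {0<..<C * \<mu>} t \<partial>P)"
proof -
  let ?gap = "\<lambda>t. (C * \<mu> - t) * indicator {0<..<C * \<mu>} t"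
  have gap_bounded: "integrable P ?gap"
    by (rule integrable_const_bound[where B="C * \<mu>"])
      (use assms in \<open>auto simp: indicator_def\<close>)
  have "min t (C * \<mu>) = C * \<mu> * indicator {0<..} t - ?gap t" if "0 \<le> t" for t
    using that assms by (cases "t = 0") (auto simp: indicator_def)
  then have "AE t in P. min t (C * \<mu>) = C * \<mu> * indicator {0<..} t - ?gap t"
    using AE_nonneg by auto
  then have "(\<integral>t. min t (C * \<mu>) \<partial>P) = (\<integral>t. C * \<mu> * indicator {0<..} t - ?gap t \<partial>P)"
    by (intro integral_cong_AE) auto
  also have "\<dots> = C * \<mu> * measure P {0<..} - (\<integral>t. ?gap t \<partial>P)"
    using gap_bounded
    by (subst Bochner_Integration.integral_diff) (auto simp: sets_P less_top[symmetric])
  finally show ?thesis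
    by (simp add: G_clip_def algebra_simps)
qed

lemma G_clip_le:
  assumes "0 \<le> C * \<mu>"
  shows "G_clip P C \<mu> \<le> (C * measure P {0<..} - 1) * \<mu>"
proof -
  have "0 \<le> (\<integral>t. (C * \<mu> - t) * indicator {0<..<C * \<mu>} t \<partial>P)"
    by (rule integral_nonneg_AE) (auto simp: indicator_def)
  then show ?thesis
    using G_clip_eq_gap_integral[OF assms] by simp
qed

lemma G_clip_eq_0_iff_null_Ioo:
  assumes "C * measure P {0<..} = 1" "0 \<le> C * \<mu>"
  shows "G_clip P C \<mu> = 0 \<longleftrightarrow> {0<..<C * \<mu>} \<in> null_sets P"
proof -
  let ?gap = "\<lambda>t. (C * \<mu> - t) * indicator {0<..<C * \<mu>} t"
  have "integrable P ?gap"
    by (rule integrable_const_bound[where B="C * \<mu>"])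
      (use assms in \<open>auto simp: indicator_def\<close>)
  moreover have "AE t in P. 0 \<le> ?gap t"
    by (auto simp: indicator_def)
  ultimately have "(\<integral>t. ?gap t \<partial>P) = 0 \<longleftrightarrow> (AE t in P. ?gap t = 0)"
    by (rule integral_nonneg_eq_0_iff_AE)
  also have "\<dots> \<longleftrightarrow> (AE t in P. t \<notin> {0<..<C * \<mu>})"
    by (intro AE_cong) (auto simp: indicator_def)
  also have "\<dots> \<longleftrightarrow> {0<..<C * \<mu>} \<in> null_sets P"
    by (subst AE_iff_null_sets) (auto simp: sets_P)
  finally show ?thesis
    using G_clip_eq_gap_integral[OF assms(2)] assms(1) by simp
qed

lemma G_clip_eq_rescaled:
  assumes "0 < \<mu>"
  shows "G_clip P C \<mu> = \<mu> * ((\<integral>t. min (t / \<mu>) C \<partial>P) - 1)"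
proof -
  have "min t (C * \<mu>) = \<mu> * min (t / \<mu>) C" for t
    using assms by (simp add: min_mult_distrib_left field_simps)
  then show ?thesis
    by (simp add: G_clip_def algebra_simps)
qed

lemma tendsto_integral_min_mult_at_top:
  assumes "0 \<le> C"
  shows "((\<lambda>s. \<integral>t. min (s * t) C \<partial>P) \<longlongrightarrow> C * measure P {0<..}) at_top"
proof -
  have "((\<lambda>s. \<integral>t. min (s * t) C \<partial>P) \<longlongrightarrow> (\<integral>t. C * indicator {0<..} t \<partial>P)) at_top"
  proof (rule integral_dominated_convergence_at_top[where w="\<lambda>_. C"])
    show "AE t in P. ((\<lambda>s. min (s * t) C) \<longlongrightarrow> C * indicator {0<..} t) at_top"
      using AE_nonneg
    proof eventually_elim
      case (elim t)
      show ?case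
      proof (cases "t = 0")
        case False
        with elim have "t > 0" by simp
        have "\<forall>\<^sub>F s in at_top. min (s * t) C = C * indicator {0<..} t"
          using eventually_ge_at_top[of "C / t"]
          by eventually_elim (use \<open>t > 0\<close> in \<open>auto simp: field_simps\<close>)
        then show ?thesis
          by (rule tendsto_eventually)
      qed (use assms in simp)
    qed
    show "\<forall>\<^sub>F s in at_top. AE t in P. norm (min (s * t) C) \<le> C"
      using eventually_ge_at_top[of 0]
      by eventually_elim (use AE_nonneg assms in \<open>auto elim!: eventually_mono\<close>)
  qed auto
  then show ?thesis
    by (simp add: sets_P less_top[symmetric])
qed

lemma tendsto_integral_min_divide_at_top:
  assumes "0 \<le> C"
  shows "((\<lambda>s. \<integral>t. min (t / s) C \<partial>P) \<longlongrightarrow> 0) at_top"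
proof -
  have "((\<lambda>s. \<integral>t. min (t / s) C \<partial>P) \<longlongrightarrow> (\<integral>t. 0 \<partial>P)) at_top"
  proof (rule integral_dominated_convergence_at_top[where w="\<lambda>_. C"])
    show "AE t in P. ((\<lambda>s. min (t / s) C) \<longlongrightarrow> 0) at_top"
    proof (rule AE_I2)
      fix t :: real
      have "((\<lambda>s. min (t / s) C) \<longlongrightarrow> min 0 C) at_top"
        by (intro tendsto_min tendsto_divide_0[OF tendsto_const] tendsto_const
            filterlim_at_top_imp_at_infinity filterlim_ident)
      then show "((\<lambda>s. min (t / s) C) \<longlongrightarrow> 0) at_top"
        using assms by simp
    qed
    show "\<forall>\<^sub>F s in at_top. AE t in P. norm (min (t / s) C) \<le> C"
      using eventually_ge_at_top[of 0]
      by eventually_elim (use AE_nonneg assms in \<open>auto elim!: eventually_mono\<close>)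
  qed auto
  then show ?thesis
    by simp
qed

lemma null_Ioo_set_eq_Icc_Sup:
  assumes "{0<..} \<notin> null_sets P"
  defines "Z \<equiv> {M. 0 \<le> M \<and> {0<..<M} \<in> null_sets P}"
  shows "Z = {0..Sup Z}"
proof -
  have null_below: "{0<..<a} \<in> null_sets P" if "x \<in> Z" "a \<le> x" for a x
  proof (rule null_sets_subset)
    show "{0<..<x} \<in> null_sets P"
      using that(1) by (simp add: Z_def)
  qed (use that(2) in \<open>auto simp: sets_P\<close>)
  have "0 \<in> Z"
    by (simp add: Z_def)
  have bdd: "bdd_above Z"
  proof (rule ccontr)
    assume "\<not> bdd_above Z"
    then have "\<exists>x\<in>Z. real n \<le> x" for n :: nat
      by (meson bdd_aboveI linorder_le_cases)
    then have "(\<Union>n. {0<..<real n}) \<in> null_sets P"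
      using null_below by (intro null_sets_UN) blast
    moreover have "(\<Union>n. {0<..<real n}) = {0<..}"
      using reals_Archimedean2 by auto
    ultimately show False
      using assms(1) by simp
  qed
  have "\<exists>x\<in>Z. Sup Z - 1 / Suc n \<le> x" for n :: nat
  proof -
    have "Sup Z - 1 / Suc n < Sup Z"
      by simp
    then obtain x where "x \<in> Z" "Sup Z - 1 / Suc n < x"
      using \<open>0 \<in> Z\<close> by (blast elim: less_cSupE)
    then show ?thesis
      by (auto intro: less_imp_le)
  qed
  then have "(\<Union>n. {0<..<Sup Z - 1 / Suc n}) \<in> null_sets P"
    using null_below by (intro null_sets_UN) blast
  moreover have "(\<Union>n::nat. {0<..<Sup Z - 1 / Suc n}) = {0<..<Sup Z}"
  proof (intro set_eqI iffI)
    fix t assume t: "t \<in> {0<..<Sup Z}"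
    then obtain n :: nat where "inverse (Suc n) < Sup Z - t"
      using reals_Archimedean[of "Sup Z - t"] by auto
    then have "t < Sup Z - 1 / Suc n"
      by (simp add: inverse_eq_divide)
    with t show "t \<in> (\<Union>n. {0<..<Sup Z - 1 / Suc n})"
      by auto
  next
    fix t assume "t \<in> (\<Union>n::nat. {0<..<Sup Z - 1 / Suc n})"
    then obtain n :: nat where "0 < t" "t < Sup Z - 1 / Suc n"
      by auto
    moreover have "0 < 1 / real (Suc n)"
      by simp
    ultimately have "t < Sup Z"
      by linarith
    with \<open>0 < t\<close> show "t \<in> {0<..<Sup Z}"
      by simp
  qed
  moreover have "0 \<le> Sup Z"
    using cSup_upper[OF \<open>0 \<in> Z\<close> bdd] .
  ultimately have "Sup Z \<in> Z"
    by (simp add: Z_def)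
  show ?thesis
  proof (intro set_eqI iffI)
    fix x assume "x \<in> Z"
    then show "x \<in> {0..Sup Z}"
      using cSup_upper[OF _ bdd] by (simp add: Z_def)
  next
    fix x assume "x \<in> {0..Sup Z}"
    then show "x \<in> Z"
      using null_below[OF \<open>Sup Z \<in> Z\<close>, of x] by (simp add: Z_def)
  qed
qed

lemma inverse_le_measure_atLeast_iff_null_Ioo:
  assumes "C * measure P {0<..} = 1" "0 \<le> M"
  shows "1 / C \<le> measure P {M..} \<longleftrightarrow> {0<..<M} \<in> null_sets P"
proof (cases "M = 0")
  case True
  have "0 < measure P {0<..}"
    using assms(1) measure_nonneg[of P "{0<..}"] by (auto simp: less_le)
  moreover from this have "C = 1 / measure P {0<..}"
    using assms(1) by (simp add: eq_divide_eq)
  ultimately have "1 \<le> C"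
    by simp
  have "measure P ({0} \<union> {0<..}) = measure P {0} + measure P {0<..}"
    by (intro finite_measure_Union) auto
  moreover have "{0} \<union> {0<..} = {0::real..}"
    by auto
  ultimately have "measure P {0::real..} = 1"
    using measure_singleton_0 by simp
  with True \<open>1 \<le> C\<close> show ?thesis
    by simp
next
  case False
  with assms(2) have "{0<..} = {0<..<M} \<union> {M..}"
    by auto
  moreover have "measure P ({0<..<M} \<union> {M..}) = measure P {0<..<M} + measure P {M..}"
    by (intro finite_measure_Union) (auto simp: sets_P)
  ultimately have "measure P {0<..} = measure P {0<..<M} + measure P {M..}"
    by simp
  moreover have "measure P {0<..} = 1 / C"
    using assms(1) by (auto simp: eq_divide_eq mult.commute)
  moreover have "{0<..<M} \<in> null_sets P \<longleftrightarrow> measure P {0<..<M} = 0"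
    by (simp add: null_sets_def emeasure_eq_measure sets_P)
  ultimately show ?thesis
    using measure_nonneg[of P "{0<..<M}"] by linarith
qed

lemma G_clip_zeros_supercritical:
  assumes "1 < C * measure P {0<..}"
  shows "0 < clipped_mean P C \<and> {\<mu>. 0 \<le> \<mu> \<and> G_clip P C \<mu> = 0} = {0, clipped_mean P C}"
proof -
  have "0 < C"
    using order.strict_trans[OF zero_less_one assms] measure_nonneg[of P "{0<..}"]
    by (auto simp: zero_less_mult_iff)
  have "\<forall>\<^sub>F s in at_top. 0 < s \<and> 1 < (\<integral>t. min (s * t) C \<partial>P)"
    using \<open>0 < C\<close> by (intro eventually_conj eventually_gt_at_top
        order_tendstoD(1)[OF tendsto_integral_min_mult_at_top assms]) simp
  then obtain s where s: "0 < s" "1 < (\<integral>t. min (s * t) C \<partial>P)"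
    by (auto simp: eventually_at_top_linorder)
  define x where "x = 1 / s"
  have "0 < x"
    using s(1) by (simp add: x_def)
  moreover have "(\<integral>t. min (t / x) C \<partial>P) = (\<integral>t. min (s * t) C \<partial>P)"
    by (simp add: x_def mult.commute)
  ultimately have "0 < G_clip P C x"
    using s(2) by (simp add: G_clip_eq_rescaled)
  have "\<forall>\<^sub>F s in at_top. 0 < s \<and> (\<integral>t. min (t / s) C \<partial>P) < 1"
    using \<open>0 < C\<close> by (intro eventually_conj eventually_gt_at_top
        order_tendstoD(2)[OF tendsto_integral_min_divide_at_top]) simp_all
  then obtain N where N: "0 < N" "(\<integral>t. min (t / N) C \<partial>P) < 1"
    by (auto simp: eventually_at_top_linorder)
  then have "G_clip P C N < 0"
    by (simp add: G_clip_eq_rescaled mult_pos_neg)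
  have concave_Icc: "concave_on {a..b} (G_clip P C)" for a b
    using concave_G_clip unfolding concave_on_def by (rule convex_on_subset) auto
  have beyond_x: "x < \<mu>" if "0 < \<mu>" "G_clip P C \<mu> \<le> 0" for \<mu>
  proof (rule ccontr)
    assume "\<not> x < \<mu>"
    then have "0 < G_clip P C \<mu>"
      using concave_on_pos_interior[OF concave_Icc, of 0 x \<mu>] \<open>0 < G_clip P C x\<close> that(1)
      by (cases "\<mu> = x") (auto simp: G_clip_0)
    with that(2) show False
      by simp
  qed
  have "x \<le> N"
    using beyond_x[of N] N(1) \<open>G_clip P C N < 0\<close> by simp
  moreover have "continuous_on {x..N} (G_clip P C)"
    using continuous_G_clip by (rule continuous_on_subset) simp
  ultimately obtain r where r: "x \<le> r" "r \<le> N" "G_clip P C r = 0"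
    using IVT2'[of "G_clip P C" N 0 x] \<open>G_clip P C N < 0\<close> \<open>0 < G_clip P C x\<close> by auto
  with \<open>0 < x\<close> have "0 < r"
    by simp
  have no_two_zeros: "\<not> a < b"
    if "0 < a" "G_clip P C a = 0" "0 < b" "G_clip P C b = 0" for a b
    using concave_on_pos_interior[OF concave_Icc, of x b a] \<open>0 < G_clip P C x\<close>
      beyond_x[of a] beyond_x[of b] that
    by fastforce
  have zeros: "\<mu> = 0 \<or> \<mu> = r" if "0 \<le> \<mu>" "G_clip P C \<mu> = 0" for \<mu>
    using no_two_zeros[of \<mu> r] no_two_zeros[of r \<mu>] \<open>0 < r\<close> r(3) that by fastforce
  have "clipped_mean P C = r"
  proof (rule clipped_mean_eqI)
    show "\<mu> \<le> r" if "0 \<le> \<mu>" "G_clip P C \<mu> = 0" for \<mu>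
      using zeros[OF that] \<open>0 < r\<close> by auto
  qed (use \<open>0 < r\<close> r(3) in auto)
  then show ?thesis
    using zeros \<open>0 < r\<close> r(3) G_clip_0 by auto
qed

lemma G_clip_zeros_critical:
  assumes "C * measure P {0<..} = 1"
  shows "(\<forall>\<mu>. 0 \<le> \<mu> \<and> \<mu> \<le> inv_C_median P C / C \<longrightarrow> G_clip P C \<mu> = 0)
    \<and> clipped_mean P C = inv_C_median P C / C"
proof -
  define Z where "Z = {M. 0 \<le> M \<and> {0<..<M} \<in> null_sets P}"
  have "0 < C * measure P {0<..}"
    using assms by simp
  then have "0 < C"
    using measure_nonneg[of P "{0<..}"] by (auto simp: zero_less_mult_iff)
  have "{0<..} \<notin> null_sets P"
    using assms by (auto simp: null_sets_def emeasure_eq_measure)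
  then have Z_eq: "Z = {0..Sup Z}"
    unfolding Z_def by (rule null_Ioo_set_eq_Icc_Sup)
  have "{M. 0 \<le> M \<and> 1 / C \<le> measure P {M..}} = Z"
    by (auto simp: Z_def inverse_le_measure_atLeast_iff_null_Ioo[OF assms])
  then have "inv_C_median P C = Sup Z"
    by (simp add: inv_C_median_def)
  have zero_iff: "G_clip P C \<mu> = 0 \<longleftrightarrow> \<mu> \<le> inv_C_median P C / C" if "0 \<le> \<mu>" for \<mu>
  proof -
    have "0 \<le> C * \<mu>"
      using \<open>0 < C\<close> that by simp
    then have "G_clip P C \<mu> = 0 \<longleftrightarrow> C * \<mu> \<in> Z"
      by (simp add: G_clip_eq_0_iff_null_Ioo[OF assms] Z_def)
    also have "\<dots> \<longleftrightarrow> C * \<mu> \<le> Sup Z"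
      using \<open>0 \<le> C * \<mu>\<close> by (subst Z_eq) simp
    also have "\<dots> \<longleftrightarrow> \<mu> \<le> inv_C_median P C / C"
      using \<open>0 < C\<close> \<open>inv_C_median P C = Sup Z\<close> by (simp add: pos_le_divide_eq mult.commute)
    finally show ?thesis .
  qed
  have "0 \<in> Z"
    by (simp add: Z_def)
  then have "0 \<le> inv_C_median P C"
    using Z_eq \<open>inv_C_median P C = Sup Z\<close> by (metis atLeastAtMost_iff)
  then have "clipped_mean P C = inv_C_median P C / C"
    using zero_iff \<open>0 < C\<close> by (intro clipped_mean_eqI) auto
  with zero_iff show ?thesis
    by auto
qed

lemma G_clip_zeros_subcritical:
  assumes "0 \<le> C" "C * measure P {0<..} < 1"
  shows "{\<mu>. 0 \<le> \<mu> \<and> G_clip P C \<mu> = 0} = {0} \<and> clipped_mean P C = 0"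
proof -
  have "G_clip P C \<mu> < 0" if "0 < \<mu>" for \<mu>
  proof -
    have "(C * measure P {0<..} - 1) * \<mu> < 0"
      using assms(2) that by (intro mult_neg_pos) simp_all
    then show ?thesis
      using G_clip_le[of C \<mu>] assms(1) that by simp
  qed
  then have zeros: "{\<mu>. 0 \<le> \<mu> \<and> G_clip P C \<mu> = 0} = {0}"
    using G_clip_0 by (force simp: le_less)
  then have "clipped_mean P C = 0"
    by (intro clipped_mean_eqI) auto
  with zeros show ?thesis
    by simp
qed

end

theorem mainTheorem16:
  fixes P :: "real measure" and C :: real
  assumes "C > 1"
    and "prob_space P"
    and "sets P = sets borel"
    and "AE t in P. t \<ge> 0"
  shows "(measure P {0} < 1 - 1 / C \<longrightarrow>
            clipped_mean P C > 0 \<and>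
            {\<mu>. \<mu> \<ge> 0 \<and> G_clip P C \<mu> = 0} = {0, clipped_mean P C})
       \<and> (measure P {0} = 1 - 1 / C \<longrightarrow>
            (\<forall>\<mu>. 0 \<le> \<mu> \<and> \<mu> \<le> inv_C_median P C / C \<longrightarrow> G_clip P C \<mu> = 0) \<and>
            clipped_mean P C = inv_C_median P C / C)
       \<and> (measure P {0} > 1 - 1 / C \<longrightarrow>
            {\<mu>. \<mu> \<ge> 0 \<and> G_clip P C \<mu> = 0} = {0} \<and> clipped_mean P C = 0)"
proof -
  interpret nonneg_real_distribution P
    using assms(2-4) by (simp add: nonneg_real_distribution_def nonneg_real_distribution_axioms_def)
  have "0 < C"
    using assms(1) by simp
  then have "measure P {0} < 1 - 1 / C \<longleftrightarrow> 1 < C * measure P {0<..}"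
    and "measure P {0} = 1 - 1 / C \<longleftrightarrow> C * measure P {0<..} = 1"
    and "1 - 1 / C < measure P {0} \<longleftrightarrow> C * measure P {0<..} < 1"
    by (auto simp: measure_singleton_0 field_simps)
  then show ?thesis
    using G_clip_zeros_supercritical G_clip_zeros_critical G_clip_zeros_subcritical[of C] \<open>0 < C\<close>
    by auto
qed

end
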